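(* Let $0=p_0<p_1<\cdots<p_M<p_{M+1}=1$ and let $c$ be a risk model on a labelled sample $\{(\bm x_j,y_j)\}_{j=1}^N$. (a) If for some $k\in\{0,1,\dots,M-1\}$ we have $p_{k+1}N_k<O_k$, then the model $c_k'$ defined by $c_k'(\bm x_j)=p_{k+1}$ if $c(\bm x_j)\in[p_k,p_{k+1})$ and $c_k'(\bm x_j)=c(\bm x_j)$ otherwise, has strictly larger $\mathrm{AUNBC}$ than $c$. (b) If for some $k\in\{1,\dots,M\}$ we have $p_kN_k>O_k$, then the model $c_k''$ defined by $c_k''(\bm x_j)=p_{k-1}$ if $c(\bm x_j)\in G_k$ and $c_k''(\bm x_j)=c(\bm x_j)$ otherwise, has strictly larger $\mathrm{AUNBC}$ than $c$.
   Context: A risk model is any function $c$ assigning to each sample a value $c(\bm x_j)\in[0,1]$. For $i=0,\dots,M$, $\mathrm{TP}_i(c)=\#\{j:c(\bm x_j)\ge p_i,\ y_j=1\}$, $\mathrm{FP}_i(c)=\#\{j:c(\bm x_j)\ge p_i,\ y_j=0\}$, with $\mathrm{TP}_{M+1}=\mathrm{FP}_{M+1}=0$, and $\mathrm{AUNBC}(c)=\frac1N\sum_{i=0}^M(p_{i+1}-p_i)\big(\mathrm{TP}_i(c)-\mathrm{FP}_i(c)\frac{p_i}{1-p_i}\big)$. The risk groups are $G_i=[p_i,p_{i+1})$ for $i=0,\dots,M-1$ and $G_M=[p_M,1]$; $N_i$ is the number of samples with $c(\bm x_j)\in G_i$ and $O_i$ the number of positive samples ($y_j=1$) with $c(\bm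 x_j)\in G_i$ (equivalently $O_i=\mathrm{TP}_i-\mathrm{TP}_{i+1}$, $N_i=O_i+\mathrm{FP}_i-\mathrm{FP}_{i+1}$). *)

theory Defs
  imports Complex_Main
begin

definition TP :: "(nat \<Rightarrow> real) \<Rightarrow> ('a \<Rightarrow> real) \<Rightarrow> (nat \<Rightarrow> 'a) \<Rightarrow> (nat \<Rightarrow> bool) \<Rightarrow> nat \<Rightarrow> nat \<Rightarrow> nat" where
  "TP p c x y N i = card {j \<in> {1..N}. c (x j) \<ge> p i \<and> y j}"

definition FP :: "(nat \<Rightarrow> real) \<Rightarrow> ('a \<Rightarrow> real) \<Rightarrow> (nat \<Rightarrow> 'a) \<Rightarrow> (nat \<Rightarrow> bool) \<Rightarrow> nat \<Rightarrow> nat \<Rightarrow> nat" where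
  "FP p c x y N i = card {j \<in> {1..N}. c (x j) \<ge> p i \<and> \<not> y j}"

definition AUNBC :: "(nat \<Rightarrow> real) \<Rightarrow> nat \<Rightarrow> ('a \<Rightarrow> real) \<Rightarrow> (nat \<Rightarrow> 'a) \<Rightarrow> (nat \<Rightarrow> bool) \<Rightarrow> nat \<Rightarrow> real" where
  "AUNBC p M c x y N = (1 / real N) * (\<Sum>i = 0..M. (p (i+1) - p i) *
     (real (TP p c x y N i) - real (FP p c x y N i) * (p i / (1 - p i))))"

definition riskgroup :: "(nat \<Rightarrow> real) \<Rightarrow> nat \<Rightarrow> nat \<Rightarrow> real set" where
  "riskgroup p M i = (if i < M then {p i..<p (i+1)} else {p M..1})"

definition Ncount :: "(nat \<Rightarrow> real) \<Rightarrow> nat \<Rightarrow> ('a \<Rightarrow> real) \<Rightarrow> (nat \<Rightarrow> 'a) \<Rightarrow> nat \<Rightarrow> nat \<Rightarrow> nat" where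
  "Ncount p M c x N i = card {j \<in> {1..N}. c (x j) \<in> riskgroup p M i}"

definition Ocount :: "(nat \<Rightarrow> real) \<Rightarrow> nat \<Rightarrow> ('a \<Rightarrow> real) \<Rightarrow> (nat \<Rightarrow> 'a) \<Rightarrow> (nat \<Rightarrow> bool) \<Rightarrow> nat \<Rightarrow> nat \<Rightarrow> nat" where
  "Ocount p M c x y N i = card {j \<in> {1..N}. c (x j) \<in> riskgroup p M i \<and> y j}"

end

theory Submission
  imports Defs
begin

text \<open>Each modified model sends all scores of one risk group G k to a single value that lies on
  the same side as G k of every threshold except one, p m (m = k + 1 when raising to p (k+1),
  m = k when lowering to p (k-1)). So only TP m and FP m change, by \<plusminus>O k and \<plusminus>(N k - O k), and
  AUNBC changes by \<plusminus>(p (m+1) - p m) / N * (O k - (N k - O k) p m / (1 - p m)), which equals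
  \<plusminus>(p (m+1) - p m) / N * (O k - p m N k) / (1 - p m).\<close>

lemma thresholds_less:
  fixes p :: "nat \<Rightarrow> real"
  assumes "\<And>i. i \<le> M \<Longrightarrow> p i < p (i+1)" and "i < j" and "j \<le> M + 1"
  shows "p i < p j"
  using assms(2,3)
proof (induction j)
  case (Suc j)
  then show ?case
    using assms(1)[of j] by (cases "i < j") (auto simp: less_Suc_eq)
qed simp

lemma thresholds_le:
  fixes p :: "nat \<Rightarrow> real"
  assumes "\<And>i. i \<le> M \<Longrightarrow> p i < p (i+1)" and "i \<le> j" and "j \<le> M + 1"
  shows "p i \<le> p j"
  using thresholds_less[of M p, OF assms(1)] assms(2,3) by (cases "i = j") (auto intro: less_imp_le)

lemma card_threshold_relabel_diff:
  fixes c :: "'a \<Rightarrow> real" and N :: nat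
  assumes "\<And>s. s \<in> S \<Longrightarrow> (t \<le> s) = b"
  shows "real (card {j \<in> {1..N}. t \<le> (if c (x j) \<in> S then v else c (x j)) \<and> L j})
           - real (card {j \<in> {1..N}. t \<le> c (x j) \<and> L j})
         = (of_bool (t \<le> v) - of_bool b) * real (card {j \<in> {1..N}. c (x j) \<in> S \<and> L j})"
proof -
  define A where "A = {j \<in> {1..N}. c (x j) \<in> S \<and> L j}"
  define B where "B = {j \<in> {1..N}. c (x j) \<notin> S \<and> t \<le> c (x j) \<and> L j}"
  have card_B_union: "card (B \<union> (if P then A else {})) = card B + of_bool P * card A" for P
  proof -
    have "finite A" "finite B"
      by (simp_all add: A_def B_def)
    moreover have "B \<inter> A = {}"
      by (auto simp: A_def B_def)
    ultimately show ?thesis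
      by (simp add: card_Un_disjoint)
  qed
  have "{j \<in> {1..N}. t \<le> (if c (x j) \<in> S then v else c (x j)) \<and> L j}
          = B \<union> (if t \<le> v then A else {})"
    by (auto simp: A_def B_def)
  moreover have "{j \<in> {1..N}. t \<le> c (x j) \<and> L j} = B \<union> (if b then A else {})"
    using assms by (auto simp: A_def B_def)
  ultimately show ?thesis
    by (simp only: card_B_union A_def[symmetric]) (simp add: algebra_simps)
qed

lemma AUNBC_relabel_diff:
  fixes p :: "nat \<Rightarrow> real" and c :: "'a \<Rightarrow> real"
  assumes "m \<le> M"
    and unchanged: "\<And>i s. i \<le> M \<Longrightarrow> i \<noteq> m \<Longrightarrow> s \<in> S \<Longrightarrow> (p i \<le> s) = (p i \<le> v)"
    and side: "\<And>s. s \<in> S \<Longrightarrow> (p m \<le> s) = b"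
  shows "AUNBC p M (\<lambda>z. if c z \<in> S then v else c z) x y N - AUNBC p M c x y N
         = (p (m+1) - p m) / real N * (of_bool (p m \<le> v) - of_bool b)
           * (real (card {j \<in> {1..N}. c (x j) \<in> S \<and> y j})
              - real (card {j \<in> {1..N}. c (x j) \<in> S \<and> \<not> y j}) * (p m / (1 - p m)))"
proof -
  define c' where "c' = (\<lambda>z. if c z \<in> S then v else c z)"
  define jump where "jump i = (if i = m then of_bool (p m \<le> v) - of_bool b else 0 :: real)" for i
  have side_i: "(p i \<le> s) = (if i = m then b else p i \<le> v)" if "i \<le> M" "s \<in> S" for i s
    using that unchanged side by auto
  have TP_diff: "real (TP p c' x y N i) - real (TP p c x y N i)
                   = jump i * real (card {j \<in> {1..N}. c (x j) \<in> S \<and> y j})"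
    and FP_diff: "real (FP p c' x y N i) - real (FP p c x y N i)
                   = jump i * real (card {j \<in> {1..N}. c (x j) \<in> S \<and> \<not> y j})"
    if "i \<le> M" for i
    using card_threshold_relabel_diff[where c = c and x = x and v = v, OF side_i[OF that]]
    by (simp_all add: TP_def FP_def c'_def jump_def split: if_splits)
  define D where "D = (p (m+1) - p m) * (of_bool (p m \<le> v) - of_bool b)
    * (real (card {j \<in> {1..N}. c (x j) \<in> S \<and> y j})
       - real (card {j \<in> {1..N}. c (x j) \<in> S \<and> \<not> y j}) * (p m / (1 - p m)))"
  let ?term = "\<lambda>c i. (p (i+1) - p i) * (real (TP p c x y N i) - real (FP p c x y N i) * (p i / (1 - p i)))"
  have term_diff: "?term c' i - ?term c i = (if i = m then D else 0)" if "i \<le> M" for i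
  proof -
    have factor: "d * (a' - b' * q) - d * (a - b * q) = d * ((a' - a) - (b' - b) * q)"
      for d a a' b b' q :: real
      by (simp add: algebra_simps)
    have regroup: "d * (J * a - J * b * q) = d * J * (a - b * q)" for d J a b q :: real
      by (simp add: algebra_simps)
    show ?thesis
      unfolding factor TP_diff[OF that] FP_diff[OF that] D_def jump_def
      by (cases "i = m") (simp_all only: simp_thms if_True regroup, simp)
  qed
  have "(\<Sum>i = 0..M. ?term c' i) - (\<Sum>i = 0..M. ?term c i) = (\<Sum>i = 0..M. ?term c' i - ?term c i)"
    by (simp add: sum_subtractf)
  also have "\<dots> = (\<Sum>i = 0..M. if i = m then D else 0)"
    by (rule sum.cong[OF refl], rule term_diff) simp
  also have "\<dots> = D"
    using \<open>m \<le> M\<close> by simp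
  finally have sums_diff: "(\<Sum>i = 0..M. ?term c' i) - (\<Sum>i = 0..M. ?term c i) = D" .
  have "AUNBC p M c' x y N - AUNBC p M c x y N = D / real N"
    unfolding AUNBC_def right_diff_distrib[symmetric] sums_diff by simp
  then show ?thesis
    by (simp add: c'_def D_def)
qed

lemma net_benefit_eq:
  fixes q pos neg :: real
  assumes "q \<noteq> 1"
  shows "pos - neg * (q / (1 - q)) = (pos - q * (pos + neg)) / (1 - q)"
  using assms by (simp add: field_simps)

lemma Ncount_eq_Ocount_add:
  "Ncount p M c x N k = Ocount p M c x y N k + card {j \<in> {1..N}. c (x j) \<in> riskgroup p M k \<and> \<not> y j}"
  unfolding Ncount_def Ocount_def
  by (subst card_Un_disjoint[symmetric]) (auto intro: arg_cong[where f = card])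

lemma Ncount_le: "Ncount p M c x N k \<le> N"
  unfolding Ncount_def by (rule order_trans[OF card_mono[of "{1..N}"]]) auto

lemma AUNBC_raise_group:
  fixes p :: "nat \<Rightarrow> real" and c :: "'a \<Rightarrow> real"
  assumes p0: "p 0 = 0"
    and pmono: "\<And>i. i \<le> M \<Longrightarrow> p i < p (i+1)"
    and pM1: "p (M+1) = 1"
    and "k < M"
    and low: "p (k+1) * real (Ncount p M c x N k) < real (Ocount p M c x y N k)"
  shows "AUNBC p M (\<lambda>z. if c z \<in> {p k..<p (k+1)} then p (k+1) else c z) x y N > AUNBC p M c x y N"
proof -
  let ?S = "{p k..<p (k+1)}" and ?q = "p (k+1)"
  let ?O = "real (Ocount p M c x y N k)" and ?N = "real (Ncount p M c x N k)"
  define pos where "pos = real (card {j \<in> {1..N}. c (x j) \<in> ?S \<and> y j})"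
  define neg where "neg = real (card {j \<in> {1..N}. c (x j) \<in> ?S \<and> \<not> y j})"
  have less: "p i < p j" if "i < j" "j \<le> M + 1" for i j
    using thresholds_less[of M p, OF pmono] that by blast
  have le: "p i \<le> p j" if "i \<le> j" "j \<le> M + 1" for i j
    using thresholds_le[of M p, OF pmono] that by blast
  have group: "riskgroup p M k = ?S"
    using \<open>k < M\<close> by (simp add: riskgroup_def)
  have counts: "?O = pos" "?N = pos + neg"
    using group by (simp_all add: pos_def neg_def Ocount_def Ncount_eq_Ocount_add[where y = y])
  have "?q < 1" "?q < p (k+2)"
    using less[of "k+1" "M+1"] less[of "k+1" "k+2"] pM1 \<open>k < M\<close> by auto
  have "0 \<le> ?q"
    using le[of 0 "k+1"] p0 \<open>k < M\<close> by simp
  then have "0 < ?O"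
    using low mult_nonneg_nonneg[of ?q ?N] by linarith
  then have "N > 0"
    using Ncount_le[of p M c x N k] Ncount_eq_Ocount_add[of p M c x N k y] by linarith
  have "AUNBC p M (\<lambda>z. if c z \<in> ?S then ?q else c z) x y N - AUNBC p M c x y N
        = (p (k+1+1) - ?q) / real N * (of_bool (?q \<le> ?q) - of_bool False) * (pos - neg * (?q / (1 - ?q)))"
    unfolding pos_def neg_def
  proof (rule AUNBC_relabel_diff)
    show "(p i \<le> s) = (p i \<le> ?q)" if "i \<le> M" "i \<noteq> k+1" "s \<in> ?S" for i s
    proof (cases "i \<le> k")
      case True
      then show ?thesis using le[of i k] le[of i "k+1"] that \<open>k < M\<close> by auto
    next
      case False
      then have "?q < p i" using less[of "k+1" i] that by auto
      then show ?thesis using that by auto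
    qed
  qed (use \<open>k < M\<close> in auto)
  also have "\<dots> = (p (k+2) - ?q) / real N * ((?O - ?q * ?N) / (1 - ?q))"
    using \<open>?q < 1\<close> by (subst net_benefit_eq) (simp_all add: counts)
  also have "\<dots> > 0"
    using \<open>?q < 1\<close> \<open>?q < p (k+2)\<close> \<open>N > 0\<close> low by simp
  finally show ?thesis by simp
qed

lemma AUNBC_lower_group:
  fixes p :: "nat \<Rightarrow> real" and c :: "'a \<Rightarrow> real"
  assumes pmono: "\<And>i. i \<le> M \<Longrightarrow> p i < p (i+1)"
    and pM1: "p (M+1) = 1"
    and "k \<in> {1..M}"
    and high: "p k * real (Ncount p M c x N k) > real (Ocount p M c x y N k)"
  shows "AUNBC p M (\<lambda>z. if c z \<in> riskgroup p M k then p (k-1) else c z) x y N > AUNBC p M c x y N"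
proof -
  let ?S = "riskgroup p M k" and ?q = "p k"
  let ?O = "real (Ocount p M c x y N k)" and ?N = "real (Ncount p M c x N k)"
  define pos where "pos = real (card {j \<in> {1..N}. c (x j) \<in> ?S \<and> y j})"
  define neg where "neg = real (card {j \<in> {1..N}. c (x j) \<in> ?S \<and> \<not> y j})"
  have less: "p i < p j" if "i < j" "j \<le> M + 1" for i j
    using thresholds_less[of M p, OF pmono] that by blast
  have le: "p i \<le> p j" if "i \<le> j" "j \<le> M + 1" for i j
    using thresholds_le[of M p, OF pmono] that by blast
  have group_bounds: "p k \<le> s \<and> (k < M \<longrightarrow> s < p (k+1))" if "s \<in> ?S" for s
    using that \<open>k \<in> {1..M}\<close> by (auto simp: riskgroup_def split: if_splits)
  have counts: "?O = pos" "?N = pos + neg"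
    by (simp_all add: pos_def neg_def Ocount_def Ncount_eq_Ocount_add[where y = y])
  have "?q < 1" "p (k-1) < ?q" "?q < p (k+1)"
    using less[of k "M+1"] less[of "k-1" k] less[of k "k+1"] pM1 \<open>k \<in> {1..M}\<close> by auto
  have "0 < ?N"
    using high by (cases "Ncount p M c x N k") auto
  then have "N > 0"
    using Ncount_le[of p M c x N k] by linarith
  have "AUNBC p M (\<lambda>z. if c z \<in> ?S then p (k-1) else c z) x y N - AUNBC p M c x y N
        = (p (k+1) - ?q) / real N * (of_bool (?q \<le> p (k-1)) - of_bool True)
          * (pos - neg * (?q / (1 - ?q)))"
    unfolding pos_def neg_def
  proof (rule AUNBC_relabel_diff)
    show "(p i \<le> s) = (p i \<le> p (k-1))" if "i \<le> M" "i \<noteq> k" "s \<in> ?S" for i s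
    proof (cases "i < k")
      case True
      then have "p i \<le> p (k-1)" "p (k-1) \<le> p k"
        using le[of i "k-1"] le[of "k-1" k] \<open>k \<in> {1..M}\<close> by auto
      then show ?thesis
        using group_bounds[OF \<open>s \<in> ?S\<close>] by auto
    next
      case False
      then have "k < i" "k < M" using that by auto
      then have "s < p i" "p (k-1) < p i"
        using group_bounds[OF \<open>s \<in> ?S\<close>] le[of "k+1" i] less[of "k-1" i] that by auto
      then show ?thesis by auto
    qed
  qed (use \<open>k \<in> {1..M}\<close> group_bounds in auto)
  also have "\<dots> = (p (k+1) - ?q) / real N * ((?q * ?N - ?O) / (1 - ?q))"
    using \<open>?q < 1\<close> \<open>p (k-1) < ?q\<close> by (subst net_benefit_eq) (simp_all add: counts field_simps)
  also have "\<dots> > 0"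
    using \<open>?q < 1\<close> \<open>?q < p (k+1)\<close> \<open>N > 0\<close> high by simp
  finally show ?thesis by simp
qed

theorem theorem2:
  fixes p :: "nat \<Rightarrow> real" and M N :: nat and c :: "'a \<Rightarrow> real"
    and x :: "nat \<Rightarrow> 'a" and y :: "nat \<Rightarrow> bool"
  assumes p0: "p 0 = 0"
    and pmono: "\<And>i. i \<le> M \<Longrightarrow> p i < p (i+1)"
    and pM1: "p (M+1) = 1"
    and risk: "\<And>j. j \<in> {1..N} \<Longrightarrow> 0 \<le> c (x j) \<and> c (x j) \<le> 1"
  shows "(\<forall>k < M. p (k+1) * real (Ncount p M c x N k) < real (Ocount p M c x y N k) \<longrightarrow>
            AUNBC p M (\<lambda>z. if c z \<in> {p k..<p (k+1)} then p (k+1) else c z) x y N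
              > AUNBC p M c x y N)
       \<and> (\<forall>k \<in> {1..M}. p k * real (Ncount p M c x N k) > real (Ocount p M c x y N k) \<longrightarrow>
            AUNBC p M (\<lambda>z. if c z \<in> riskgroup p M k then p (k-1) else c z) x y N
              > AUNBC p M c x y N)"
  using AUNBC_raise_group[OF p0 pmono pM1] AUNBC_lower_group[OF pmono pM1] by blast

end
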